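(* Assume the standing setting, let $\epsilon>0$, fix a coarse index $j$ and an integer $m$ with $1\le m\le r/2$. If $|u^0_i-u^0_{i+1}|\le \epsilon/3^{M}$ for all $i\in\mathbb Z$, then $|u^M_{jr}-u^M_{jr+m}|\le m\epsilon$.
   Context: Standing setting. Let $F:\mathbb R\to\mathbb R$ be continuously differentiable. For a spatial step $\eta>0$, a time step $\tau>0$ and an initial sequence $(z^0_i)_{i\in\mathbb Z}$ of reals, the EFC (Euler forward in time, centered in space) scheme produces $(z^n_i)_{i\in\mathbb Z,\,n\in\mathbb N}$ by $z^{n+1}_i=z^n_i-F'(z^n_i)\frac{\tau}{2\eta}\,(z^n_{i+1}-z^n_{i-1})$. It satisfies the CFL condition if $|F'(z^n_i)|\,\tau/\eta\le 1$ for all $i\in\mathbb Z$, $n\in\mathbb N$. Fix $a\in\mathbb R$, $h>0$, $\Delta t>0$, an integer $N>1$ and an even integer $r\ge 2$; put $k=h/r$, $dt=\Delta t/r$, $M=Nr$. Let $u_0:\mathbb R\to\mathbb R$. The coarse solution $(w^n_j)$ is the EFC scheme with $\eta=h$, $\tau=\Delta t$, $w^0_j=u_0(a+jh)$; the fine solution $(u^n_i)$ is the EFC scheme with $\eta=k$, $\tau=dt$, $u^0_i=u_0(a+ik)$ (so $w^0_j=u^0_{jr}$). Both are assumed to satisfy the CFL condition. *)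

theory Defs
  imports "HOL-Analysis.Analysis"
begin

text \<open>EFC scheme (Euler forward in time, centred in space) with derivative F',
spatial step eta, time step tau, initial sequence z0; result indexed by time n and space i.\<close>
fun efc :: "(real \<Rightarrow> real) \<Rightarrow> real \<Rightarrow> real \<Rightarrow> (int \<Rightarrow> real) \<Rightarrow> nat \<Rightarrow> int \<Rightarrow> real" where
  "efc F' eta tau z0 0 i = z0 i"
| "efc F' eta tau z0 (Suc n) i =
     efc F' eta tau z0 n i
     - F' (efc F' eta tau z0 n i) * (tau / (2 * eta))
       * (efc F' eta tau z0 n (i + 1) - efc F' eta tau z0 n (i - 1))"

definition cfl :: "(real \<Rightarrow> real) \<Rightarrow> real \<Rightarrow> real \<Rightarrow> (int \<Rightarrow> real) \<Rightarrow> bool" where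
  "cfl F' eta tau z0 \<longleftrightarrow>
     (\<forall>n i. \<bar>F' (efc F' eta tau z0 n i)\<bar> * tau / eta \<le> 1)"

end

theory Submission
  imports Defs
begin

text \<open>Under the CFL condition both coefficients \<open>F'(z) \<tau>/(2\<eta>)\<close> of the centred difference are
  at most \<open>1/2\<close> in modulus, so one EFC step at most triples the largest jump between neighbouring
  values. After \<open>M\<close> fine steps neighbouring values therefore differ by at most \<open>3^M\<close> times the
  initial bound, i.e. by \<open>\<epsilon>\<close>, and the triangle inequality over \<open>m\<close> neighbours gives \<open>m \<epsilon>\<close>.\<close>

lemma cfl_coefficient_bound:
  assumes "eta > 0" "tau \<ge> 0" "cfl F' eta tau z0"
  shows "\<bar>F' (efc F' eta tau z0 n i) * (tau / (2 * eta))\<bar> \<le> 1 / 2"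
proof -
  have "\<bar>F' (efc F' eta tau z0 n i)\<bar> * tau / eta \<le> 1"
    using assms(3) unfolding cfl_def by blast
  moreover have "\<bar>F' (efc F' eta tau z0 n i) * (tau / (2 * eta))\<bar>
      = (\<bar>F' (efc F' eta tau z0 n i)\<bar> * tau / eta) / 2"
    using assms(1,2) by (simp add: abs_mult field_simps)
  ultimately show ?thesis by simp
qed

lemma efc_increment_Suc_bound:
  assumes "eta > 0" "tau \<ge> 0" "cfl F' eta tau z0"
    and step: "\<And>k. \<bar>efc F' eta tau z0 n k - efc F' eta tau z0 n (k + 1)\<bar> \<le> d"
  shows "\<bar>efc F' eta tau z0 (Suc n) i - efc F' eta tau z0 (Suc n) (i + 1)\<bar> \<le> 3 * d"
proof -
  define z where "z = efc F' eta tau z0 n"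
  define c where "c k = F' (z k) * (tau / (2 * eta))" for k
  have c_le: "\<bar>c k\<bar> \<le> 1 / 2" for k
    unfolding c_def z_def using assms(1-3) by (rule cfl_coefficient_bound)
  have z_step: "\<bar>z k - z (k + 1)\<bar> \<le> d" for k
    unfolding z_def by (rule step)
  have centred: "\<bar>z (k + 1) - z (k - 1)\<bar> \<le> 2 * d" for k
    using z_step[of "k - 1"] z_step[of k] by auto
  have "\<bar>c k * (z (k + 1) - z (k - 1))\<bar> \<le> 1 / 2 * (2 * d)" for k
    unfolding abs_mult using c_le[of k] centred[of k] by (intro mult_mono) auto
  from this[of i] this[of "i + 1"] z_step[of i]
  have "\<bar>(z i - z (i + 1)) - c i * (z (i + 1) - z (i - 1))
           + c (i + 1) * (z (i + 1 + 1) - z (i + 1 - 1))\<bar> \<le> 3 * d"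
    by (simp add: abs_le_iff)
  then show ?thesis
    by (simp add: z_def c_def)
qed

lemma efc_increment_bound:
  assumes "eta > 0" "tau \<ge> 0" "cfl F' eta tau z0"
    and "\<And>k. \<bar>z0 k - z0 (k + 1)\<bar> \<le> d"
  shows "\<bar>efc F' eta tau z0 n i - efc F' eta tau z0 n (i + 1)\<bar> \<le> 3 ^ n * d"
proof (induction n arbitrary: i)
  case 0
  then show ?case using assms(4) by simp
next
  case (Suc n)
  show ?case
    unfolding power_Suc mult.assoc by (rule efc_increment_Suc_bound[OF assms(1-3) Suc.IH])
qed

lemma abs_diff_shift_le:
  fixes f :: "int \<Rightarrow> real"
  assumes "\<And>k. \<bar>f k - f (k + 1)\<bar> \<le> d"
  shows "\<bar>f i - f (i + int m)\<bar> \<le> real m * d"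
proof (induction m)
  case 0
  then show ?case by simp
next
  case (Suc m)
  have "f i - f (i + int (Suc m)) = (f i - f (i + int m)) + (f (i + int m) - f (i + int m + 1))"
    by (simp add: ac_simps)
  then have "\<bar>f i - f (i + int (Suc m))\<bar> \<le> \<bar>f i - f (i + int m)\<bar> + \<bar>f (i + int m) - f (i + int m + 1)\<bar>"
    by (metis abs_triangle_ineq)
  also have "\<dots> \<le> real m * d + d"
    using Suc.IH assms by (intro add_mono)
  finally show ?case by (simp add: algebra_simps)
qed

theorem proposition9:
  fixes F F' :: "real \<Rightarrow> real" and u0 :: "real \<Rightarrow> real"
    and a h \<Delta>t \<epsilon> :: real and N r m :: nat and j :: int
  assumes F_deriv: "\<And>x. (F has_real_derivative F' x) (at x)"
    and F'_cont: "continuous_on UNIV F'"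
    and h_pos: "h > 0" and dt_pos: "\<Delta>t > 0"
    and N_gt: "N > 1"
    and r_even: "even r" and r_ge: "r \<ge> 2"
    and cfl_coarse: "cfl F' h \<Delta>t (\<lambda>j. u0 (a + real_of_int j * h))"
    and cfl_fine: "cfl F' (h / real r) (\<Delta>t / real r) (\<lambda>i. u0 (a + real_of_int i * (h / real r)))"
    and eps_pos: "\<epsilon> > 0"
    and m_ge: "1 \<le> m" and m_le: "m \<le> r div 2"
    and init_close: "\<And>i::int. \<bar>u0 (a + real_of_int i * (h / real r))
                                 - u0 (a + real_of_int (i + 1) * (h / real r))\<bar>
                               \<le> \<epsilon> / 3 ^ (N * r)"
  shows "\<bar>efc F' (h / real r) (\<Delta>t / real r) (\<lambda>i. u0 (a + real_of_int i * (h / real r)))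
            (N * r) (j * int r)
        - efc F' (h / real r) (\<Delta>t / real r) (\<lambda>i. u0 (a + real_of_int i * (h / real r)))
            (N * r) (j * int r + int m)\<bar> \<le> real m * \<epsilon>"
proof -
  let ?u = "efc F' (h / real r) (\<Delta>t / real r) (\<lambda>i. u0 (a + real_of_int i * (h / real r)))"
  have "real r > 0" using r_ge by simp
  then have "\<bar>?u (N * r) i - ?u (N * r) (i + 1)\<bar> \<le> 3 ^ (N * r) * (\<epsilon> / 3 ^ (N * r))" for i
    using h_pos dt_pos cfl_fine init_close by (intro efc_increment_bound) auto
  then have "\<bar>?u (N * r) i - ?u (N * r) (i + 1)\<bar> \<le> \<epsilon>" for i
    by simp
  then show ?thesis
    by (rule abs_diff_shift_le)
qed

end
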